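(* Let $V$ be a smooth field on $\mathbb{R}^2$ with values in symmetric $2\times2$ real matrices such that $I+V$ is positive definite, and let $F=(I+V)R$ with $R$ orthogonal (polar decomposition) satisfy $\det F=1$. Assume moreover that there is a smooth scalar function $\theta$ on $\mathbb{R}^2$ with $\nabla\cdot V = A(I+V)\nabla\theta$. Then \[ \mathrm{tr}\,V = -\det V \] and \[ \nabla\cdot\nabla\cdot V = -\nabla\cdot\big[AV(I+V)^{-1}A\,\nabla\cdot V\big], \] where $A=\begin{pmatrix}0&-1\\1&0\end{pmatrix}$.
   Context: For a matrix field $M$, $(\nabla\cdot M)_i=\sum_j\partial_j M_{ij}$, and $\nabla\cdot\nabla\cdot V=\sum_{i,j}\partial_i\partial_j V_{ij}$; for a vector field $w$, $\nabla\cdot w=\sum_i\partial_i w_i$. In the paper's setting, the relation $\nabla\cdot V=A(I+V)\nabla\theta$ (with $\theta$ the rotation angle of $R$) follows from $\nabla\cdot F^T=0$ and is preserved by the viscoelastic flow. *)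

theory Defs
  imports "HOL-Analysis.Analysis"
begin

definition partial :: "2 \<Rightarrow> (real^2 \<Rightarrow> real) \<Rightarrow> real^2 \<Rightarrow> real" where
  "partial j f x = deriv (\<lambda>t. f (x + t *\<^sub>R axis j 1)) 0"

fun Ck :: "nat \<Rightarrow> (real^2 \<Rightarrow> real) \<Rightarrow> bool" where
  "Ck 0 f = continuous_on UNIV f"
| "Ck (Suc k) f = (f differentiable_on UNIV \<and> (\<forall>j. Ck k (partial j f)))"

definition smooth_fun :: "(real^2 \<Rightarrow> real) \<Rightarrow> bool" where
  "smooth_fun f \<longleftrightarrow> (\<forall>k. Ck k f)"

definition smooth_mat :: "(real^2 \<Rightarrow> real^2^2) \<Rightarrow> bool" where
  "smooth_mat M \<longleftrightarrow> (\<forall>i j. smooth_fun (\<lambda>x. M x $ i $ j))"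

definition symmetric_mat :: "real^2^2 \<Rightarrow> bool" where
  "symmetric_mat M \<longleftrightarrow> transpose M = M"

definition pos_def_mat :: "real^2^2 \<Rightarrow> bool" where
  "pos_def_mat M \<longleftrightarrow> (\<forall>v. v \<noteq> 0 \<longrightarrow> v \<bullet> (M *v v) > 0)"

definition grad :: "(real^2 \<Rightarrow> real) \<Rightarrow> real^2 \<Rightarrow> real^2" where
  "grad f x = (\<chi> i. partial i f x)"

definition div_vec :: "(real^2 \<Rightarrow> real^2) \<Rightarrow> real^2 \<Rightarrow> real" where
  "div_vec w x = (\<Sum>i\<in>UNIV. partial i (\<lambda>y. w y $ i) x)"

definition div_mat :: "(real^2 \<Rightarrow> real^2^2) \<Rightarrow> real^2 \<Rightarrow> real^2" where
  "div_mat M x = (\<chi> i. \<Sum>j\<in>UNIV. partial j (\<lambda>y. M y $ i $ j) x)"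

definition rotA :: "real^2^2" where
  "rotA = vector [vector [0, -1], vector [1, 0]]"

end

theory Submission
  imports Defs
begin

text \<open>
  Since \<open>I + V\<close> is symmetric positive definite, \<open>det (I + V) > 0\<close>, and \<open>det R = \<plusminus>1\<close> together
  with \<open>det F = 1\<close> forces \<open>det (I + V) = 1\<close>; for \<open>2 \<times> 2\<close> matrices \<open>det (I + V) = 1 + tr V + det V\<close>,
  which is the first identity. For the second, \<open>A\<^sup>2 = -I\<close> turns
  \<open>A V (I + V)\<^sup>-\<^sup>1 A \<nabla>\<cdot>V = A V (I + V)\<^sup>-\<^sup>1 A A (I + V) \<nabla>\<theta>\<close> into \<open>-A V \<nabla>\<theta>\<close>, while
  \<open>\<nabla>\<cdot>V = A \<nabla>\<theta> + A V \<nabla>\<theta>\<close>. So both sides equal \<open>\<nabla>\<cdot>(A V \<nabla>\<theta>)\<close>, because \<open>\<nabla>\<cdot>(A \<nabla>\<theta>)\<close>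
  is the difference of the two mixed second partials of \<open>\<theta>\<close>, which vanishes by Schwarz's theorem.
\<close>

lemma has_real_derivative_partial_line:
  fixes f :: "real^2 \<Rightarrow> real"
  assumes "f differentiable (at (x + t *\<^sub>R axis j 1))"
  shows "((\<lambda>s. f (x + s *\<^sub>R axis j 1)) has_real_derivative
           partial j f (x + t *\<^sub>R axis j 1)) (at t)"
proof -
  have line_derivative: "((\<lambda>s. f (y + s *\<^sub>R u)) has_real_derivative
      frechet_derivative f (at (y + r *\<^sub>R u)) u) (at r)"
    if "f differentiable (at (y + r *\<^sub>R u))" for y u r
  proof -
    let ?F = "frechet_derivative f (at (y + r *\<^sub>R u))"
    have F: "(f has_derivative ?F) (at (y + r *\<^sub>R u))"
      using that frechet_derivative_works by blast
    have "((\<lambda>s. y + s *\<^sub>R u) has_derivative (\<lambda>d. d *\<^sub>R u)) (at r)"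
      by (auto intro!: derivative_eq_intros)
    from has_derivative_compose[OF this F]
    have "((\<lambda>s. f (y + s *\<^sub>R u)) has_derivative (\<lambda>d. ?F (d *\<^sub>R u))) (at r)" .
    moreover have "(\<lambda>d. ?F (d *\<^sub>R u)) = (*) (?F u)"
      using has_derivative_linear[OF F] by (auto simp: linear_cmul mult.commute)
    ultimately show ?thesis by (simp add: has_field_derivative_def)
  qed
  have "partial j f z = frechet_derivative f (at z) (axis j 1)"
    if "f differentiable (at z)" for z
    unfolding partial_def using line_derivative[of z 0 "axis j 1"] that
    by (simp add: DERIV_imp_deriv)
  with line_derivative[of x t "axis j 1"] assms show ?thesis by simp
qed

lemma has_real_derivative_partial:
  fixes f :: "real^2 \<Rightarrow> real"
  assumes "f differentiable (at x)"
  shows "((\<lambda>s. f (x + s *\<^sub>R axis j 1)) has_real_derivative partial j f x) (at 0)"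
  using has_real_derivative_partial_line[of f x 0 j] assms by simp

lemma partial_add:
  fixes f g :: "real^2 \<Rightarrow> real"
  assumes "f differentiable (at x)" "g differentiable (at x)"
  shows "partial j (\<lambda>y. f y + g y) x = partial j f x + partial j g x"
  unfolding partial_def[of j "\<lambda>y. f y + g y"]
  by (intro DERIV_imp_deriv DERIV_add has_real_derivative_partial assms)

lemma partial_uminus:
  fixes f :: "real^2 \<Rightarrow> real"
  assumes "f differentiable (at x)"
  shows "partial j (\<lambda>y. - f y) x = - partial j f x"
  unfolding partial_def[of j "\<lambda>y. - f y"]
  by (intro DERIV_imp_deriv DERIV_minus has_real_derivative_partial assms)

lemma smooth_fun_differentiable: "smooth_fun f \<Longrightarrow> f differentiable (at x)"
  unfolding smooth_fun_def by (metis Ck.simps(2) UNIV_I differentiable_on_def)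

lemma smooth_fun_partial: "smooth_fun f \<Longrightarrow> smooth_fun (partial j f)"
  unfolding smooth_fun_def by (metis Ck.simps(2))

lemma smooth_fun_continuous_on: "smooth_fun f \<Longrightarrow> continuous_on UNIV f"
  unfolding smooth_fun_def by (metis Ck.simps(1))

lemma second_difference_mvt:
  fixes f :: "real^2 \<Rightarrow> real"
  assumes df: "\<And>y. f differentiable (at y)"
    and dpf: "\<And>y. partial j f differentiable (at y)"
    and h: "h > 0"
  obtains \<sigma> \<tau> where "0 < \<sigma>" "\<sigma> < h" "0 < \<tau>" "\<tau> < h"
    "f (x + h *\<^sub>R axis i 1 + h *\<^sub>R axis j 1) - f (x + h *\<^sub>R axis i 1)
       - f (x + h *\<^sub>R axis j 1) + f x
     = h * h * partial i (partial j f) (x + \<sigma> *\<^sub>R axis i 1 + \<tau> *\<^sub>R axis j 1)"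
proof -
  let ?ei = "axis i 1 :: real^2" and ?ej = "axis j 1 :: real^2"
  let ?\<phi> = "\<lambda>t. f ((x + h *\<^sub>R ?ei) + t *\<^sub>R ?ej) - f (x + t *\<^sub>R ?ej)"
  let ?\<phi>' = "\<lambda>t. partial j f ((x + h *\<^sub>R ?ei) + t *\<^sub>R ?ej) - partial j f (x + t *\<^sub>R ?ej)"
  have "(?\<phi> has_real_derivative ?\<phi>' t) (at t)" for t
    by (intro DERIV_diff has_real_derivative_partial_line df)
  then obtain \<tau> where \<tau>: "0 < \<tau>" "\<tau> < h" "?\<phi> h - ?\<phi> 0 = h * ?\<phi>' \<tau>"
    using MVT2[OF h, of ?\<phi> ?\<phi>'] by auto
  let ?\<psi> = "\<lambda>s. partial j f ((x + \<tau> *\<^sub>R ?ej) + s *\<^sub>R ?ei)"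
  let ?\<psi>' = "\<lambda>s. partial i (partial j f) ((x + \<tau> *\<^sub>R ?ej) + s *\<^sub>R ?ei)"
  have "(?\<psi> has_real_derivative ?\<psi>' s) (at s)" for s
    by (intro has_real_derivative_partial_line dpf)
  then obtain \<sigma> where \<sigma>: "0 < \<sigma>" "\<sigma> < h" "?\<psi> h - ?\<psi> 0 = h * ?\<psi>' \<sigma>"
    using MVT2[OF h, of ?\<psi> ?\<psi>'] by auto
  have "?\<phi>' \<tau> = ?\<psi> h - ?\<psi> 0" by (simp add: algebra_simps)
  moreover have "(x + \<tau> *\<^sub>R ?ej) + \<sigma> *\<^sub>R ?ei = x + \<sigma> *\<^sub>R ?ei + \<tau> *\<^sub>R ?ej"
    by (simp add: algebra_simps)
  ultimately show ?thesis
    using that \<tau> \<sigma> by (simp add: algebra_simps)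
qed

text \<open>Schwarz's theorem: the second difference over a small square is \<open>h\<^sup>2\<close> times either mixed
  partial at some point of the square, so by continuity the two mixed partials agree at the corner.\<close>

lemma partial_commute:
  fixes f :: "real^2 \<Rightarrow> real"
  assumes df: "\<And>y. f differentiable (at y)"
    and di: "\<And>y. partial i f differentiable (at y)"
    and dj: "\<And>y. partial j f differentiable (at y)"
    and cij: "continuous_on UNIV (partial i (partial j f))"
    and cji: "continuous_on UNIV (partial j (partial i f))"
  shows "partial i (partial j f) x = partial j (partial i f) x"
proof (rule ccontr)
  let ?g1 = "partial i (partial j f)" and ?g2 = "partial j (partial i f)"
  assume ne: "?g1 x \<noteq> ?g2 x"
  define e where "e = \<bar>?g1 x - ?g2 x\<bar> / 2"
  have e: "e > 0" using ne by (simp add: e_def)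
  obtain r1 where r1: "r1 > 0" "\<And>y. dist y x < r1 \<Longrightarrow> dist (?g1 y) (?g1 x) < e"
    using cij e unfolding continuous_on_iff by blast
  obtain r2 where r2: "r2 > 0" "\<And>y. dist y x < r2 \<Longrightarrow> dist (?g2 y) (?g2 x) < e"
    using cji e unfolding continuous_on_iff by blast
  define h where "h = min r1 r2 / 4"
  have h: "h > 0" using r1 r2 by (simp add: h_def)
  have near: "dist (x + s *\<^sub>R axis k 1 + t *\<^sub>R axis l 1) x < min r1 r2"
    if "0 < s" "s < h" "0 < t" "t < h" for s t and k l :: 2
  proof -
    have "dist (x + s *\<^sub>R axis k 1 + t *\<^sub>R axis l 1) x
        \<le> norm (s *\<^sub>R (axis k 1 :: real^2)) + norm (t *\<^sub>R (axis l 1 :: real^2))"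
      unfolding dist_norm by (simp add: norm_triangle_ineq del: norm_scaleR)
    also have "\<dots> = s + t" using that by (simp add: norm_axis_1)
    finally show ?thesis using that h_def r1 r2 by simp
  qed
  obtain s1 t1 where st1: "0 < s1" "s1 < h" "0 < t1" "t1 < h"
    "f (x + h *\<^sub>R axis i 1 + h *\<^sub>R axis j 1) - f (x + h *\<^sub>R axis i 1) - f (x + h *\<^sub>R axis j 1) + f x
     = h * h * ?g1 (x + s1 *\<^sub>R axis i 1 + t1 *\<^sub>R axis j 1)"
    using second_difference_mvt[OF df dj h] .
  obtain s2 t2 where st2: "0 < s2" "s2 < h" "0 < t2" "t2 < h"
    "f (x + h *\<^sub>R axis j 1 + h *\<^sub>R axis i 1) - f (x + h *\<^sub>R axis j 1) - f (x + h *\<^sub>R axis i 1) + f x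
     = h * h * ?g2 (x + s2 *\<^sub>R axis j 1 + t2 *\<^sub>R axis i 1)"
    using second_difference_mvt[OF df di h] .
  have corner: "x + h *\<^sub>R axis j 1 + h *\<^sub>R axis i 1 = x + h *\<^sub>R axis i 1 + h *\<^sub>R (axis j 1 :: real^2)"
    by (simp add: algebra_simps)
  have "h * h * ?g1 (x + s1 *\<^sub>R axis i 1 + t1 *\<^sub>R axis j 1)
      = h * h * ?g2 (x + s2 *\<^sub>R axis j 1 + t2 *\<^sub>R axis i 1)"
    using st1(5) st2(5)[unfolded corner] by linarith
  with h have eq: "?g1 (x + s1 *\<^sub>R axis i 1 + t1 *\<^sub>R axis j 1) = ?g2 (x + s2 *\<^sub>R axis j 1 + t2 *\<^sub>R axis i 1)"
    by simp
  have "dist (?g1 (x + s1 *\<^sub>R axis i 1 + t1 *\<^sub>R axis j 1)) (?g1 x) < e"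
    using r1(2) near[OF st1(1-4)] by simp
  moreover have "dist (?g2 (x + s2 *\<^sub>R axis j 1 + t2 *\<^sub>R axis i 1)) (?g2 x) < e"
    using r2(2) near[OF st2(1-4)] by simp
  ultimately have "\<bar>?g1 x - ?g2 x\<bar> < 2 * e" using eq by (simp add: dist_real_def)
  thus False by (simp add: e_def)
qed

lemma smooth_fun_partial_commute:
  "smooth_fun f \<Longrightarrow> partial i (partial j f) x = partial j (partial i f) x"
  by (intro partial_commute smooth_fun_differentiable smooth_fun_continuous_on smooth_fun_partial)

lemma div_vec_add:
  fixes u w :: "real^2 \<Rightarrow> real^2"
  assumes "\<And>i. (\<lambda>y. u y $ i) differentiable (at x)" "\<And>i. (\<lambda>y. w y $ i) differentiable (at x)"
  shows "div_vec (\<lambda>y. u y + w y) x = div_vec u x + div_vec w x"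
  unfolding div_vec_def by (simp add: partial_add assms sum.distrib)

lemma div_vec_uminus:
  fixes w :: "real^2 \<Rightarrow> real^2"
  assumes "\<And>i. (\<lambda>y. w y $ i) differentiable (at x)"
  shows "div_vec (\<lambda>y. - w y) x = - div_vec w x"
  unfolding div_vec_def by (simp add: partial_uminus assms sum_negf)

lemma div_vec_rotA_grad:
  assumes "smooth_fun \<theta>"
  shows "div_vec (\<lambda>y. rotA *v grad \<theta> y) x = 0"
proof -
  have "(\<lambda>y. (rotA *v grad \<theta> y) $ 1) = (\<lambda>y. - partial 2 \<theta> y)"
    and "(\<lambda>y. (rotA *v grad \<theta> y) $ 2) = partial 1 \<theta>"
    by (simp_all add: rotA_def grad_def matrix_vector_mult_def sum_2)
  then show ?thesis
    unfolding div_vec_def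
    using partial_uminus[OF smooth_fun_differentiable[OF smooth_fun_partial[OF assms]]]
      smooth_fun_partial_commute[OF assms]
    by (simp add: sum_2)
qed

lemma pos_def_mat_det_pos:
  assumes pd: "pos_def_mat M" and sym: "symmetric_mat M"
  shows "det M > 0"
proof -
  have "transpose M $ 1 $ 2 = M $ 1 $ 2" using sym unfolding symmetric_mat_def by simp
  then have m12: "M$1$2 = M$2$1" by (simp add: transpose_def)
  have "(axis 1 1 :: real^2) \<noteq> 0" by (simp add: axis_eq_0_iff)
  hence "axis 1 1 \<bullet> (M *v axis 1 1) > 0" using pd unfolding pos_def_mat_def by blast
  hence m11: "M$1$1 > 0"
    by (simp add: inner_vec_def matrix_vector_mult_def sum_2 axis_def)
  let ?v = "vector [M$1$2, - M$1$1] :: real^2" \<comment> \<open>chosen so that \<open>v \<bullet> M v = M\<^sub>1\<^sub>1 det M\<close>\<close>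
  have "?v $ 2 \<noteq> 0" using m11 by simp
  hence "?v \<noteq> 0" by (metis zero_index)
  hence "?v \<bullet> (M *v ?v) > 0" using pd unfolding pos_def_mat_def by blast
  hence "M$1$1 * det M > 0"
    using m12 by (simp add: inner_vec_def matrix_vector_mult_def sum_2 det_2 algebra_simps power2_eq_square)
  thus ?thesis using m11 by (simp add: zero_less_mult_iff)
qed

lemma det_mat_1_add_2:
  fixes M :: "'a::comm_ring_1^2^2"
  shows "det (mat 1 + M) = 1 + trace M + det M"
  by (simp add: det_2 trace_def sum_2 mat_def algebra_simps)

lemma matrix_inv_left:
  assumes "invertible M"
  shows "matrix_inv M ** M = mat 1"
  using someI_ex[OF assms[unfolded invertible_def]] unfolding matrix_inv_def by blast

lemma rotA_rotA: "rotA *v (rotA *v u) = - (u :: real^2)"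
  by (simp add: vec_eq_iff forall_2 rotA_def matrix_vector_mult_def sum_2)

lemma rotA_conjugate_cancel:
  fixes M N :: "real^2^2"
  assumes "invertible M"
  shows "(rotA ** N ** matrix_inv M ** rotA) *v ((rotA ** M) *v g) = - ((rotA ** N) *v g)"
proof -
  have "(rotA ** N ** matrix_inv M ** rotA) *v ((rotA ** M) *v g)
      = (rotA ** N ** matrix_inv M) *v (rotA *v (rotA *v (M *v g)))"
    by (simp add: matrix_vector_mul_assoc matrix_mul_assoc)
  also have "\<dots> = - ((rotA ** N ** matrix_inv M) *v (M *v g))"
    by (simp only: rotA_rotA vec.neg)
  also have "\<dots> = - ((rotA ** N) *v ((matrix_inv M ** M) *v g))"
    by (simp add: matrix_vector_mul_assoc matrix_mul_assoc)
  also have "\<dots> = - ((rotA ** N) *v g)"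
    by (simp add: matrix_inv_left[OF assms])
  finally show ?thesis .
qed

theorem lemma2p1:
  fixes V R :: "real^2 \<Rightarrow> real^2^2" and \<theta> :: "real^2 \<Rightarrow> real"
  assumes V_smooth: "smooth_mat V"
    and R_smooth: "smooth_mat R"
    and V_sym: "\<And>x. symmetric_mat (V x)"
    and V_pos: "\<And>x. pos_def_mat (mat 1 + V x)"
    and R_orth: "\<And>x. orthogonal_matrix (R x)"
    and detF: "\<And>x. det ((mat 1 + V x) ** R x) = 1"
    and theta_smooth: "smooth_fun \<theta>"
    and divV: "\<And>x. div_mat V x = (rotA ** (mat 1 + V x)) *v grad \<theta> x"
  shows "(\<forall>x. trace (V x) = - det (V x)) \<and>
         (\<forall>x. div_vec (div_mat V) x =
           - div_vec (\<lambda>y. (rotA ** V y ** matrix_inv (mat 1 + V y) ** rotA) *v div_mat V y) x)"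
proof -
  have det1: "det (mat 1 + V x) = 1" for x
  proof -
    have "symmetric_mat (mat 1 + V x)"
      using V_sym[of x] unfolding symmetric_mat_def by (simp add: transpose_def vec_eq_iff mat_def)
    with V_pos have "det (mat 1 + V x) > 0" by (rule pos_def_mat_det_pos)
    moreover have "det (mat 1 + V x) * det (R x) = 1" using detF[of x] by (simp add: det_mul)
    ultimately show ?thesis using det_orthogonal_matrix[OF R_orth, of x] by auto
  qed
  let ?u = "\<lambda>y. rotA *v grad \<theta> y" and ?w = "\<lambda>y. (rotA ** V y) *v grad \<theta> y"
  have divV_split: "div_mat V = (\<lambda>y. ?u y + ?w y)"
    by (rule ext) (simp add: divV matrix_add_ldistrib matrix_vector_mult_add_rdistrib)
  have "invertible (mat 1 + V y)" for y
    using det1[of y] by (simp add: invertible_det_nz)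
  then have field:
    "(\<lambda>y. (rotA ** V y ** matrix_inv (mat 1 + V y) ** rotA) *v div_mat V y) = (\<lambda>y. - ?w y)"
    by (intro ext) (simp only: divV rotA_conjugate_cancel)
  have "\<And>i j. (\<lambda>y. V y $ i $ j) differentiable (at x)" "\<And>j. partial j \<theta> differentiable (at x)" for x
    using V_smooth theta_smooth
    by (simp_all add: smooth_mat_def smooth_fun_differentiable smooth_fun_partial)
  then have du: "(\<lambda>y. ?u y $ i) differentiable (at x)" and dw: "(\<lambda>y. ?w y $ i) differentiable (at x)"
    for i x
    by (simp_all add: matrix_vector_mult_def matrix_matrix_mult_def grad_def sum_2)
  have "div_vec (div_mat V) x = div_vec ?w x" for x
    unfolding divV_split div_vec_add[OF du dw] by (simp add: div_vec_rotA_grad[OF theta_smooth])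
  moreover have "div_vec (\<lambda>y. (rotA ** V y ** matrix_inv (mat 1 + V y) ** rotA) *v div_mat V y) x
      = - div_vec ?w x" for x
    unfolding field by (rule div_vec_uminus[OF dw])
  moreover have "trace (V x) = - det (V x)" for x
    using det1[of x] by (simp add: det_mat_1_add_2)
  ultimately show ?thesis by simp
qed

end
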